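(* Let $p$ be a prime, $q=p^n$, $d$ a natural number with $(d,p)=1$, $\psi$ a nontrivial additive character of $\mathbb{F}_p$, and $r$ a natural number with $r<d$. Let $\alpha\in\mathbb{F}_{q^r}$. Then the average of $\psi\left(\mathrm{Tr}_{\mathbb{F}_{q^r}/\mathbb{F}_p}f(\alpha)\right)$ over $f\in\mathcal{F}_d$ (uniform) equals $1$ if $\alpha=0$, or if $p\mid r$ and $\alpha\in\mathbb{F}_{q^{r/p}}$; and equals $0$ otherwise.
   Context: $\mathcal{F}_d$ denotes the set of polynomials $f=\sum_{i=0}^d a_ix^i\in\mathbb{F}_q[x]$ with $a_d\neq 0$ and $a_i=0$ for every $i\ge 0$ divisible by $p$. *)

theory Defs
  imports "HOL-Computational_Algebra.Polynomial" Complex_Main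
begin

text \<open>We work inside a finite field 'a of order q^r = p^(n*r).
  Subfields are described as fixed sets of Frobenius powers:
  F_{p^k} = {x. x^(p^k) = x}.\<close>

definition subfield_of_order :: "nat \<Rightarrow> 'a::field set" where
  "subfield_of_order m = {x. x ^ m = x}"

definition abs_trace :: "nat \<Rightarrow> nat \<Rightarrow> 'a::field \<Rightarrow> 'a" where
  "abs_trace p k x = (\<Sum>i<k. x ^ (p ^ i))"

definition additive_char_prime_field :: "nat \<Rightarrow> ('a::field \<Rightarrow> complex) \<Rightarrow> bool" where
  "additive_char_prime_field p \<psi> \<longleftrightarrow>
     (\<forall>x \<in> subfield_of_order p. \<psi> x \<noteq> 0) \<and>
     (\<forall>x \<in> subfield_of_order p. \<forall>y \<in> subfield_of_order p. \<psi> (x + y) = \<psi> x * \<psi> y)"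

definition nontrivial_on_prime_field :: "nat \<Rightarrow> ('a::field \<Rightarrow> complex) \<Rightarrow> bool" where
  "nontrivial_on_prime_field p \<psi> \<longleftrightarrow> (\<exists>x \<in> subfield_of_order p. \<psi> x \<noteq> 1)"

definition poly_family :: "nat \<Rightarrow> nat \<Rightarrow> nat \<Rightarrow> 'a::field poly set" where
  "poly_family p q d = {f. degree f = d \<and> coeff f d \<noteq> 0 \<and>
       (\<forall>i. coeff f i \<in> subfield_of_order q) \<and>
       (\<forall>i. p dvd i \<longrightarrow> coeff f i = 0)}"

end

theory Submission
  imports Defs "HOL-Computational_Algebra.Primes" "HOL-Algebra.FiniteProduct"
begin

text \<open>Write Tr for the absolute trace of the field with q^r elements. If \<alpha> = 0, or p divides r
  and \<alpha> lies in the subfield with q^(r/p) elements, then every f(\<alpha>) with f in F_d lies in a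
  subfield of index p, where Tr is p times a trace and hence vanishes; so every summand is 1.

  Otherwise consider the conjugates of \<alpha> over F_q. A power sum argument produces an exponent
  i \<le> r not divisible by p for which the relative trace of \<alpha>^i down to F_q is nonzero, and then
  Tr(a \<alpha>^i), a \<in> F_q, takes a value x with \<psi>(x) \<noteq> 1. Since i < d is not divisible by p,
  translation f \<mapsto> f + a X^i permutes F_d and multiplies each summand by \<psi>(x), so the sum is 0.\<close>

subsection \<open>Finite fields and the Frobenius map\<close>

lemma power_card_eq_self:
  fixes x :: "'a::{field,finite}"
  shows "x ^ card (UNIV :: 'a set) = x"
proof (cases "x = 0")
  case True
  then show ?thesis using finite_UNIV_card_ge_0[where ?'a = 'a] by simp
next
  case False
  define G :: "'a monoid" where "G = \<lparr>carrier = - {0}, mult = (*), one = 1\<rparr>"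
  have "comm_group G"
  proof (rule comm_groupI)
    fix y assume "y \<in> carrier G"
    then show "\<exists>z\<in>carrier G. z \<otimes>\<^bsub>G\<^esub> y = \<one>\<^bsub>G\<^esub>"
      by (intro bexI[of _ "inverse y"]) (simp_all add: G_def)
  qed (auto simp: G_def)
  have pow: "y [^]\<^bsub>G\<^esub> k = y ^ k" for y :: 'a and k :: nat
    by (induction k) (simp_all add: G_def)
  have card: "card (carrier G) = card (UNIV :: 'a set) - 1"
    by (simp add: G_def Compl_eq_Diff_UNIV card_Diff_singleton)
  have "x ^ (card (UNIV :: 'a set) - 1) = 1"
    using comm_group.power_order_eq_one[OF \<open>comm_group G\<close>, of x] False
    by (simp add: pow card) (simp add: G_def)
  moreover have "card (UNIV :: 'a set) = Suc (card (UNIV :: 'a set) - 1)"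
    using finite_UNIV_card_ge_0[where ?'a = 'a] by simp
  ultimately show ?thesis
    by (metis power_Suc2 mult_1_left)
qed

lemma CHAR_eq_prime_if_card_prime_power:
  assumes "prime p" and "card (UNIV :: 'a::{field,finite} set) = p ^ k"
  shows "CHAR('a) = p"
proof -
  have prime: "prime CHAR('a)"
    by (rule prime_CHAR_semidom) (simp add: finite_imp_CHAR_pos)
  have "(\<Sum>y\<in>UNIV. 1 + y) = (\<Sum>y\<in>UNIV. y :: 'a)"
    by (rule sum.reindex_bij_witness[of _ "\<lambda>y. y - 1" "\<lambda>y. 1 + y"]) auto
  then have "of_nat (card (UNIV :: 'a set)) = (0 :: 'a)"
    by (simp add: sum.distrib)
  then have "CHAR('a) dvd p ^ k"
    using assms(2) of_nat_eq_0_iff_char_dvd by metis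
  then show ?thesis
    using prime assms(1) by (metis prime_dvd_power primes_dvd_imp_eq)
qed

lemma power_power_eq_self:
  fixes x :: "'a::monoid_mult"
  assumes "x ^ m = x"
  shows "x ^ (m ^ t) = x"
  by (induction t) (simp_all add: power_mult assms)

lemma power_power_commute:
  fixes x :: "'a::monoid_mult"
  shows "(x ^ i) ^ j = (x ^ j) ^ i"
  by (metis power_mult mult.commute)

lemma minus_power_CHAR_power:
  fixes x :: "'a::ring_1"
  assumes "prime CHAR('a)"
  shows "(- x) ^ (CHAR('a) ^ e) = - (x ^ (CHAR('a) ^ e))"
  by (induction e)
     (simp_all add: power_Suc2 power_mult minus_power_prime_CHAR[OF refl assms] del: power_Suc)

lemma poly_power_CHAR_power_eq_self:
  fixes f :: "'a::field poly"
  assumes "prime CHAR('a)" "b = CHAR('a) ^ e"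
    and "\<And>i. coeff f i ^ b = coeff f i" "x ^ b = x"
  shows "poly f x ^ b = poly f x"
  by (simp add: poly_altdef freshmans_dream_sum'[OF assms(1,2)] power_mult_distrib
      power_power_commute[of x _ b] assms(3,4))

subsection \<open>The trace\<close>

text \<open>For every prime power b, abs_trace b K is the trace from the field with
  b^K elements down to the one with b elements, so it also serves as the relative trace.\<close>

lemma abs_trace_add:
  fixes x y :: "'a::field"
  assumes "prime CHAR('a)" "b = CHAR('a) ^ e"
  shows "abs_trace b K (x + y) = abs_trace b K x + abs_trace b K y"
  using assms by (simp add: abs_trace_def freshmans_dream' power_mult[symmetric] sum.distrib)

lemma abs_trace_mult_fixed:
  fixes a w :: "'a::field"
  assumes "a ^ b = a"
  shows "abs_trace b K (a * w) = a * abs_trace b K w"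
  by (simp add: abs_trace_def sum_distrib_left power_mult_distrib power_power_eq_self[OF assms])

lemma abs_trace_power_CHAR_power:
  fixes w :: "'a::field"
  assumes "prime CHAR('a)"
  shows "abs_trace b K (w ^ (CHAR('a) ^ k)) = abs_trace b K w ^ (CHAR('a) ^ k)"
  by (simp add: abs_trace_def freshmans_dream_sum'[OF assms refl] power_power_commute)

lemma abs_trace_power_eq_self:
  fixes w :: "'a::field"
  assumes "prime CHAR('a)" "b = CHAR('a) ^ e" "w ^ (b ^ K) = w"
  shows "abs_trace b K w ^ b = abs_trace b K w"
proof -
  have "abs_trace b K w ^ b = (\<Sum>i<K. w ^ (b ^ Suc i))"
    by (simp add: abs_trace_def freshmans_dream_sum'[OF assms(1,2)] power_mult[symmetric]
        mult.commute)
  also have "\<dots> = abs_trace b K w"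
    using sum.lessThan_Suc_shift[of "\<lambda>i. w ^ (b ^ i)" K] assms(3)
    by (simp add: abs_trace_def add.commute)
  finally show ?thesis .
qed

lemma sum_lessThan_mult_periodic:
  fixes g :: "nat \<Rightarrow> 'a::comm_semiring_1"
  assumes "\<And>i. g (i + k) = g i"
  shows "(\<Sum>i<m * k. g i) = of_nat m * (\<Sum>i<k. g i)"
proof -
  have per: "g (i + j * k) = g i" for i j
    by (induction j) (simp_all add: assms add.assoc[symmetric] add.commute[of k])
  have "(\<Sum>i<m * k. g i) = (\<Sum>j<m. \<Sum>i\<in>{j * k..<j * k + k}. g i)"
    by (rule sum.nat_group[symmetric])
  also have "\<dots> = (\<Sum>j<m. \<Sum>i<k. g (i + j * k))"
    using sum.shift_bounds_nat_ivl[of g 0 "_ * k" k] by (simp add: atLeast0LessThan add.commute)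
  finally show ?thesis by (simp add: per)
qed

lemma abs_trace_periodic:
  fixes y :: "'a::field"
  assumes "y ^ (b ^ k) = y"
  shows "abs_trace b (m * k) y = of_nat m * abs_trace b k y"
  unfolding abs_trace_def
proof (rule sum_lessThan_mult_periodic)
  show "y ^ (b ^ (i + k)) = y ^ (b ^ i)" for i
    by (simp add: power_add power_mult power_power_commute[of y "b ^ i"] assms)
qed

lemma abs_trace_tower:
  fixes w :: "'a::field"
  assumes "prime CHAR('a)" "b = CHAR('a) ^ e"
  shows "abs_trace b (n * r) w = abs_trace b n (abs_trace (b ^ n) r w)"
proof -
  have "abs_trace b (n * r) w = (\<Sum>j<r. \<Sum>i\<in>{j * n..<j * n + n}. w ^ (b ^ i))"
    by (simp add: abs_trace_def mult.commute sum.nat_group)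
  also have "\<dots> = (\<Sum>j<r. \<Sum>k<n. (w ^ ((b ^ n) ^ j)) ^ (b ^ k))"
    using sum.shift_bounds_nat_ivl[of "\<lambda>i. w ^ (b ^ i)" 0 "_ * n" n]
    by (simp add: atLeast0LessThan power_add power_mult[symmetric] mult.commute add.commute)
  also have "\<dots> = abs_trace b n (abs_trace (b ^ n) r w)"
    using assms by (simp add: abs_trace_def freshmans_dream_sum' power_mult[symmetric]
        sum.swap[of _ "{..<r}"])
  finally show ?thesis .
qed

lemma abs_trace_nonzero_exists:
  assumes "prime p" "card (UNIV :: 'a::{field,finite} set) = p ^ K" "0 < K"
  shows "\<exists>z::'a. abs_trace p K z \<noteq> 0"
proof (rule ccontr)
  assume trace_zero: "\<not> ?thesis"
  define P :: "'a poly" where "P = (\<Sum>i<K. monom 1 (p ^ i))"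
  have p1: "1 < p" using assms(1) prime_gt_1_nat by blast
  have "coeff P 1 = (\<Sum>i<K. if i = 0 then 1 else 0)"
    unfolding P_def coeff_sum coeff_monom
    by (intro sum.cong refl) (use p1 in \<open>auto simp: power_eq_1_iff\<close>)
  then have "coeff P 1 = 1" using assms(3) by simp
  then have "P \<noteq> 0" by auto
  have "degree P \<le> p ^ (K - 1)"
    unfolding P_def
  proof (rule degree_sum_le)
    fix i assume "i \<in> {..<K}"
    then have "p ^ i \<le> p ^ (K - 1)" using p1 by (intro power_increasing) auto
    then show "degree (monom (1::'a) (p ^ i)) \<le> p ^ (K - 1)"
      using degree_monom_le order_trans by blast
  qed simp
  moreover have "card {x. poly P x = 0} \<le> degree P"
    by (rule card_poly_roots_bound[OF \<open>P \<noteq> 0\<close>])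
  moreover have "{x. poly P x = 0} = UNIV"
    using trace_zero by (auto simp: P_def abs_trace_def poly_sum poly_monom)
  moreover have "p ^ (K - 1) < p ^ K" using p1 assms(3) by (intro power_strict_increasing) auto
  ultimately show False using assms(2) by simp
qed

lemma abs_trace_surj:
  assumes "prime p" "card (UNIV :: 'a::{field,finite} set) = p ^ K" "0 < K"
    and "x ^ p = (x :: 'a)"
  shows "\<exists>z. abs_trace p K z = x"
proof -
  have char: "CHAR('a) = p" by (rule CHAR_eq_prime_if_card_prime_power[OF assms(1,2)])
  obtain z :: 'a where z: "abs_trace p K z \<noteq> 0"
    using abs_trace_nonzero_exists[OF assms(1-3)] by blast
  have "abs_trace p K z ^ p = abs_trace p K z"
  proof (rule abs_trace_power_eq_self[of p 1])
    show "z ^ (p ^ K) = z" using power_card_eq_self[of z] assms(2) by simp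
  qed (simp_all add: char assms(1))
  then have "(x / abs_trace p K z) ^ p = x / abs_trace p K z"
    by (simp add: power_divide assms(4))
  then have "abs_trace p K (x / abs_trace p K z * z) = x / abs_trace p K z * abs_trace p K z"
    by (rule abs_trace_mult_fixed)
  then have "abs_trace p K (x / abs_trace p K z * z) = x"
    using z by simp
  then show ?thesis ..
qed

lemma abs_trace_mult_surj:
  fixes w :: "'a::{field,finite}"
  assumes "prime p" "q = p ^ n" "card (UNIV :: 'a set) = q ^ r" "0 < n" "0 < r"
    and "x ^ p = x" "abs_trace q r w \<noteq> 0"
  shows "\<exists>a. a ^ q = a \<and> abs_trace p (n * r) (a * w) = x"
proof -
  have card: "card (UNIV :: 'a set) = p ^ (n * r)" using assms(2,3) by (simp add: power_mult)
  have char: "CHAR('a) = p" by (rule CHAR_eq_prime_if_card_prime_power[OF assms(1) card])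
  have rel_trace_fixed: "abs_trace q r y ^ q = abs_trace q r y" for y :: 'a
    using abs_trace_power_eq_self[of q n y r] power_card_eq_self[of y] assms(1-3) char by simp
  obtain z where z: "abs_trace p (n * r) z = x"
    using abs_trace_surj[OF assms(1) card _ assms(6)] assms(4,5) by auto
  define a where "a = abs_trace q r z / abs_trace q r w"
  have "a ^ q = a" by (simp add: a_def power_divide rel_trace_fixed)
  have "prime CHAR('a)" "p = CHAR('a) ^ 1" using char assms(1) by simp_all
  note tower = abs_trace_tower[OF this, of n r, folded assms(2)]
  have "abs_trace p (n * r) (a * w) = abs_trace p n (a * abs_trace q r w)"
    by (simp add: tower abs_trace_mult_fixed[OF \<open>a ^ q = a\<close>])
  also have "\<dots> = x"
    using assms(7) z by (simp add: a_def tower)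
  finally show ?thesis using \<open>a ^ q = a\<close> by blast
qed

subsection \<open>Powers with nonvanishing relative trace\<close>

lemma power_orbit_period:
  fixes \<alpha> :: "'a::monoid_mult"
  assumes "\<alpha> ^ (b ^ r) = \<alpha>" "0 < r"
  obtains m where "0 < m" "m dvd r" "\<alpha> ^ (b ^ m) = \<alpha>"
    and "inj_on (\<lambda>j. \<alpha> ^ (b ^ j)) {..<m}"
proof -
  define P where "P k \<longleftrightarrow> 0 < k \<and> \<alpha> ^ (b ^ k) = \<alpha>" for k
  define m where "m = (LEAST k. P k)"
  have shift: "(\<alpha> ^ (b ^ j)) ^ (b ^ k) = \<alpha> ^ (b ^ (j + k))" for j k
    by (simp add: power_add power_mult)
  have "P m" unfolding m_def by (rule LeastI[of P r]) (simp add: P_def assms)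
  have minimal: "\<not> P k" if "k < m" for k
    using not_less_Least[of k P] that unfolding m_def by blast
  have "\<alpha> ^ (b ^ (r mod m)) = \<alpha>"
  proof -
    have "\<alpha> ^ (b ^ (m * (r div m))) = \<alpha>"
      using \<open>P m\<close> power_power_eq_self[of \<alpha> "b ^ m" "r div m"] by (simp add: P_def power_mult)
    then have "\<alpha> ^ (b ^ (r mod m)) = \<alpha> ^ (b ^ (m * (r div m) + r mod m))"
      by (metis shift)
    then show ?thesis using assms(1) by simp
  qed
  then have "m dvd r"
    using minimal[of "r mod m"] \<open>P m\<close> by (auto simp: P_def mod_eq_0_iff_dvd)
  moreover have "inj_on (\<lambda>j. \<alpha> ^ (b ^ j)) {..<m}"
  proof (rule linorder_inj_onI')
    fix j j' assume jj': "j \<in> {..<m}" "j' \<in> {..<m}" "j < j'"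
    show "\<alpha> ^ (b ^ j) \<noteq> \<alpha> ^ (b ^ j')"
    proof
      assume eq: "\<alpha> ^ (b ^ j) = \<alpha> ^ (b ^ j')"
      have "\<alpha> ^ (b ^ (j + (m - j'))) = \<alpha> ^ (b ^ (j' + (m - j')))"
        by (metis eq shift)
      then have "P (j + (m - j'))" using jj' \<open>P m\<close> by (simp add: P_def)
      then show False using minimal jj' by auto
    qed
  qed
  ultimately show thesis using \<open>P m\<close> by (intro that) (simp_all add: P_def)
qed

text \<open>The polynomial X \<Prod>(X - x) over x \<in> A - {a} vanishes on A except at a, so its values
  sum to a nonzero element; expanding in the monomials gives a nonvanishing power sum.\<close>

lemma power_sum_nonzero_exists:
  fixes A :: "'a::field set"
  assumes "finite A" "a \<in> A" "a \<noteq> 0"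
  shows "\<exists>i. 0 < i \<and> i \<le> card A \<and> (\<Sum>x\<in>A. x ^ i) \<noteq> 0"
proof -
  define G where "G = pCons 0 (\<Prod>y\<in>A - {a}. [:- y, 1:])"
  have poly_G: "poly G x = x * (\<Prod>y\<in>A - {a}. x - y)" for x
    by (simp add: G_def poly_prod)
  have "degree G \<le> Suc (card (A - {a}))"
    unfolding G_def
    by (rule order.trans[OF degree_pCons_le], rule Suc_le_mono[THEN iffD2],
        rule order.trans[OF degree_prod_sum_le]) (simp_all add: assms(1))
  moreover have "card A > 0" using assms(1,2) card_gt_0_iff by blast
  ultimately have deg: "degree G \<le> card A"
    using assms(1,2) by (simp add: card_Diff_singleton)
  have "(\<Sum>x\<in>A. poly G x) = poly G a"
    by (rule sum.remove[OF assms(1,2), THEN trans], subst sum.neutral)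
       (auto simp: poly_G assms(1))
  also have "\<dots> \<noteq> 0" using assms(1,3) by (simp add: poly_G)
  also have "(\<Sum>x\<in>A. poly G x) = (\<Sum>i\<le>degree G. coeff G i * (\<Sum>x\<in>A. x ^ i))"
    by (simp add: poly_altdef sum_distrib_left sum.swap[of _ A])
  finally obtain i where i: "i \<le> degree G" "coeff G i * (\<Sum>x\<in>A. x ^ i) \<noteq> 0"
    by (meson sum.neutral atMost_iff)
  moreover have "0 < i" using i(2) by (cases i) (auto simp: G_def)
  ultimately show ?thesis using deg by auto
qed

lemma abs_trace_power_nonzero_reduce:
  fixes w :: "'a::field"
  assumes "prime CHAR('a)" "0 < i" "abs_trace b K (w ^ i) \<noteq> 0"
  shows "\<exists>j. 0 < j \<and> j \<le> i \<and> \<not> CHAR('a) dvd j \<and> abs_trace b K (w ^ j) \<noteq> 0"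
proof -
  have "\<not> is_unit CHAR('a)" using assms(1) by auto
  then obtain j where j: "i = CHAR('a) ^ multiplicity CHAR('a) i * j" "\<not> CHAR('a) dvd j"
    using multiplicity_decompose' assms(2) by (metis neq0_conv)
  have "abs_trace b K (w ^ i) = abs_trace b K (w ^ j) ^ (CHAR('a) ^ multiplicity CHAR('a) i)"
    by (subst j(1))
       (simp add: power_mult power_power_commute abs_trace_power_CHAR_power[OF assms(1)])
  then have "abs_trace b K (w ^ j) \<noteq> 0" using assms(3) by auto
  moreover have "0 < j" using j(1) assms(2) by (metis gr0I mult_0_right)
  moreover have "j \<le> i" using j(1) assms(2) by (metis dvd_imp_le dvd_triv_right)
  ultimately show ?thesis using j(2) by blast
qed

lemma power_rel_trace_nonzero_exists:
  fixes \<alpha> :: "'a::field"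
  assumes "prime CHAR('a)" "\<alpha> \<noteq> 0" "\<alpha> ^ (q ^ r) = \<alpha>" "0 < r"
    and "\<not> (CHAR('a) dvd r \<and> \<alpha> ^ (q ^ (r div CHAR('a))) = \<alpha>)"
  shows "\<exists>i. 0 < i \<and> i \<le> r \<and> \<not> CHAR('a) dvd i \<and> abs_trace q r (\<alpha> ^ i) \<noteq> 0"
proof -
  obtain m where m: "0 < m" "m dvd r" "\<alpha> ^ (q ^ m) = \<alpha>"
    and inj: "inj_on (\<lambda>j. \<alpha> ^ (q ^ j)) {..<m}"
    using power_orbit_period[OF assms(3,4)] by blast
  define A where "A = (\<lambda>j. \<alpha> ^ (q ^ j)) ` {..<m}"
  have "\<alpha> \<in> A" using m(1) unfolding A_def by (force intro: image_eqI[of _ _ 0])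
  then obtain i where i: "0 < i" "i \<le> m" "(\<Sum>x\<in>A. x ^ i) \<noteq> 0"
    using power_sum_nonzero_exists[of A \<alpha>] assms(2) inj by (auto simp: A_def card_image)
  have "(\<Sum>x\<in>A. x ^ i) = abs_trace q m (\<alpha> ^ i)"
    using inj by (simp add: A_def sum.reindex abs_trace_def power_power_commute)
  then have trace_m: "abs_trace q m (\<alpha> ^ i) \<noteq> 0" using i(3) by simp
  have "\<not> CHAR('a) dvd r div m"
  proof
    assume "CHAR('a) dvd r div m"
    then obtain t where t: "r = CHAR('a) * (t * m)"
      using m(2) by (metis dvd_div_mult_self dvdE mult.assoc)
    then have "\<alpha> ^ (q ^ (r div CHAR('a))) = \<alpha>"
      using m(3) power_power_eq_self[of \<alpha> "q ^ m" t] assms(1)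
      by (simp add: power_mult mult.commute prime_gt_0_nat)
    then show False using assms(5) t by simp
  qed
  then have "of_nat (r div m) \<noteq> (0 :: 'a)" by (simp add: of_nat_eq_0_iff_char_dvd)
  moreover have "abs_trace q r (\<alpha> ^ i) = of_nat (r div m) * abs_trace q m (\<alpha> ^ i)"
    using abs_trace_periodic[of "\<alpha> ^ i" q m "r div m"] m(2,3)
    by (simp add: power_power_commute[of \<alpha> i])
  ultimately have "abs_trace q r (\<alpha> ^ i) \<noteq> 0" using trace_m by simp
  moreover have "i \<le> r" using i(2) dvd_imp_le[OF m(2) assms(4)] by simp
  ultimately show ?thesis
    using abs_trace_power_nonzero_reduce[OF assms(1) i(1)] by (meson order_trans)
qed

subsection \<open>The family F_d\<close>

lemma poly_family_finite: "finite (poly_family p q d :: 'a::{field,finite} poly set)"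
proof -
  have "poly_family p q d \<subseteq> Poly ` {xs :: 'a list. set xs \<subseteq> UNIV \<and> length xs = Suc d}"
  proof
    fix f :: "'a poly" assume "f \<in> poly_family p q d"
    then have "length (coeffs f) = Suc d" by (auto simp: poly_family_def length_coeffs_degree)
    then show "f \<in> Poly ` {xs. set xs \<subseteq> UNIV \<and> length xs = Suc d}"
      by (intro image_eqI[of _ _ "coeffs f"]) auto
  qed
  then show ?thesis by (rule finite_subset) (intro finite_imageI finite_lists_length_eq finite_UNIV)
qed

lemma monom_one_mem_poly_family:
  assumes "prime p" "coprime d p" "0 < q"
  shows "monom (1::'a::field) d \<in> poly_family p q d"
proof -
  have "\<not> p dvd d"
    using assms(1,2) by (metis coprime_common_divisor not_prime_unit dvd_refl)
  then show ?thesis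
    using assms(3) by (auto simp: poly_family_def subfield_of_order_def coeff_monom degree_monom_eq)
qed

lemma poly_family_add_monom:
  fixes f :: "'a::field poly"
  assumes "prime CHAR('a)" "q = CHAR('a) ^ e"
    and "f \<in> poly_family p q d" "i < d" "\<not> p dvd i" "b ^ q = b"
  shows "f + monom b i \<in> poly_family p q d"
proof -
  have f: "degree f = d" "coeff f d \<noteq> 0" "\<And>k. coeff f k ^ q = coeff f k"
    "\<And>k. p dvd k \<Longrightarrow> coeff f k = 0"
    using assms(3) by (auto simp: poly_family_def subfield_of_order_def)
  have "degree (monom b i) < degree f" using degree_monom_le[of b i] assms(4) f(1) by linarith
  then have "degree (f + monom b i) = d" using f(1) by (simp add: degree_add_eq_left)
  moreover have "(coeff f k + (if i = k then b else 0)) ^ q = coeff f k + (if i = k then b else 0)"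
    for k
    using f(3)[of k] assms(6) freshmans_dream'[OF assms(1,2)] assms(1,2)
    by (simp add: prime_gt_0_nat)
  ultimately show ?thesis
    using f assms(4,5) by (auto simp: poly_family_def subfield_of_order_def coeff_monom)
qed

lemma abs_trace_poly_eq_0:
  fixes f :: "'a::field poly"
  assumes "CHAR('a) = p" "prime p" "q = p ^ n" "f \<in> poly_family p q d"
    and "\<alpha> = 0 \<or> p dvd r \<and> \<alpha> ^ (q ^ (r div p)) = \<alpha>"
  shows "abs_trace p (n * r) (poly f \<alpha>) = 0"
  using assms(5)
proof
  assume "\<alpha> = 0"
  then show ?thesis
    using assms(2,4) prime_gt_0_nat[of p]
    by (simp add: poly_family_def poly_0_coeff_0 abs_trace_def power_0_left)
next
  assume "p dvd r \<and> \<alpha> ^ (q ^ (r div p)) = \<alpha>"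
  then obtain k where k: "n * r = p * k" "\<alpha> ^ (p ^ k) = \<alpha>" "q ^ (r div p) = p ^ k"
    using assms(3) by (intro that[of "n * (r div p)"]) (auto simp: power_mult)
  have "coeff f i ^ q = coeff f i" for i
    using assms(4) by (simp add: poly_family_def subfield_of_order_def)
  then have "coeff f i ^ (p ^ k) = coeff f i" for i
    using power_power_eq_self[of "coeff f i" q "r div p"] k(3) by simp
  then have "poly f \<alpha> ^ (p ^ k) = poly f \<alpha>"
    using poly_power_CHAR_power_eq_self[of "p ^ k" k f \<alpha>] assms(1,2) k(2) by simp
  then show ?thesis
    using abs_trace_periodic[of "poly f \<alpha>" p k p] of_nat_CHAR[where 'a = 'a] assms(1) k(1) by simp
qed

lemma additive_char_zero:
  assumes "additive_char_prime_field p \<psi>" "0 < p"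
  shows "\<psi> 0 = 1"
proof -
  have "0 \<in> subfield_of_order p" using assms(2) by (simp add: subfield_of_order_def)
  moreover note assms(1)[unfolded additive_char_prime_field_def]
  ultimately have "\<psi> (0 + 0) = \<psi> 0 * \<psi> 0" "\<psi> 0 \<noteq> 0" by blast+
  then show ?thesis by simp
qed

lemma sum_eq_0_if_translation_scales:
  fixes h :: "'b::ab_group_add \<Rightarrow> 'c::idom"
  assumes "\<And>f. f \<in> S \<Longrightarrow> f + g \<in> S" "\<And>f. f \<in> S \<Longrightarrow> f - g \<in> S"
    and "\<And>f. f \<in> S \<Longrightarrow> h (f + g) = c * h f" "c \<noteq> 1"
  shows "sum h S = 0"
proof -
  have "sum h S = (\<Sum>f\<in>S. h (f + g))"
    by (rule sum.reindex_bij_witness[of _ "\<lambda>f. f + g" "\<lambda>f. f - g"]) (auto simp: assms(1,2))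
  also have "\<dots> = c * sum h S" by (simp add: assms(3) sum_distrib_left)
  finally show ?thesis using assms(4) by (metis mult_cancel_right1 mult.commute)
qed

lemma additive_char_sum_poly_family_eq_0:
  fixes \<alpha> :: "'a::{field,finite}"
  assumes "prime p" "0 < n" "q = p ^ n" "0 < r" "r < d"
    and "card (UNIV :: 'a set) = q ^ r"
    and "additive_char_prime_field p \<psi>" "nontrivial_on_prime_field p \<psi>"
    and "\<alpha> \<noteq> 0" "\<not> (p dvd r \<and> \<alpha> ^ (q ^ (r div p)) = \<alpha>)"
  shows "(\<Sum>f\<in>poly_family p q d. \<psi> (abs_trace p (n * r) (poly f \<alpha>))) = 0"
proof -
  have card: "card (UNIV :: 'a set) = p ^ (n * r)" using assms(3,6) by (simp add: power_mult)
  have char: "CHAR('a) = p" by (rule CHAR_eq_prime_if_card_prime_power[OF assms(1) card])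
  have prime_char: "prime CHAR('a)" "p = CHAR('a) ^ 1" "q = CHAR('a) ^ n"
    using char assms(1,3) by simp_all
  obtain i where i: "0 < i" "i \<le> r" "\<not> p dvd i" "abs_trace q r (\<alpha> ^ i) \<noteq> 0"
    using power_rel_trace_nonzero_exists[OF prime_char(1) assms(9) _ assms(4)]
      power_card_eq_self[of \<alpha>] assms(6,10) char by auto
  obtain x where x: "x ^ p = x" "\<psi> x \<noteq> 1"
    using assms(8) by (auto simp: nontrivial_on_prime_field_def subfield_of_order_def)
  obtain a where a: "a ^ q = a" "abs_trace p (n * r) (a * \<alpha> ^ i) = x"
    using abs_trace_mult_surj[OF assms(1,3,6,2,4) x(1) i(4)] by blast
  have "abs_trace p (n * r) y ^ p = abs_trace p (n * r) y" for y :: 'a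
    using abs_trace_power_eq_self[OF prime_char(1,2)] power_card_eq_self[of y] card by simp
  then have \<psi>_trace_add:
    "\<psi> (abs_trace p (n * r) (y + z)) = \<psi> (abs_trace p (n * r) y) * \<psi> (abs_trace p (n * r) z)"
    for y z :: 'a
    using assms(7) abs_trace_add[OF prime_char(1,2)]
    by (simp add: additive_char_prime_field_def subfield_of_order_def)
  have "(- a) ^ q = - a" using minus_power_CHAR_power[OF prime_char(1)] a(1) prime_char(3) by simp
  show ?thesis
  proof (rule sum_eq_0_if_translation_scales[where g = "monom a i" and c = "\<psi> x"])
    fix f :: "'a poly" assume f: "f \<in> poly_family p q d"
    have "i < d" using i(2) assms(5) by simp
    show "f + monom a i \<in> poly_family p q d"
      by (rule poly_family_add_monom[OF prime_char(1,3) f \<open>i < d\<close> i(3) a(1)])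
    show "f - monom a i \<in> poly_family p q d"
      using poly_family_add_monom[OF prime_char(1,3) f \<open>i < d\<close> i(3) \<open>(- a) ^ q = - a\<close>]
      by (simp flip: minus_monom)
    show "\<psi> (abs_trace p (n * r) (poly (f + monom a i) \<alpha>))
      = \<psi> x * \<psi> (abs_trace p (n * r) (poly f \<alpha>))"
      by (simp add: poly_monom \<psi>_trace_add a(2))
  qed (use x(2) in simp)
qed

theorem lemma2:
  fixes p n q d r :: nat and \<psi> :: "'a::{field,finite} \<Rightarrow> complex" and \<alpha> :: 'a
  assumes "prime p" and "0 < n" and "q = p ^ n"
    and "coprime d p"
    and "0 < r" and "r < d"
    and "card (UNIV :: 'a set) = q ^ r"
    and "additive_char_prime_field p \<psi>" and "nontrivial_on_prime_field p \<psi>"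
  shows "(\<Sum>f\<in>poly_family p q d. \<psi> (abs_trace p (n * r) (poly f \<alpha>)))
           / of_nat (card (poly_family p q d :: 'a poly set))
         = (if \<alpha> = 0 \<or> (p dvd r \<and> \<alpha> \<in> subfield_of_order (q ^ (r div p))) then 1 else 0)"
proof (cases "\<alpha> = 0 \<or> (p dvd r \<and> \<alpha> \<in> subfield_of_order (q ^ (r div p)))")
  case True
  have "CHAR('a) = p"
    using CHAR_eq_prime_if_card_prime_power[OF assms(1)] assms(3,7) by (metis power_mult)
  then have "\<psi> (abs_trace p (n * r) (poly f \<alpha>)) = 1" if "f \<in> poly_family p q d" for f
    using abs_trace_poly_eq_0[OF _ assms(1,3) that] True
      additive_char_zero[OF assms(8) prime_gt_0_nat[OF assms(1)]]
    by (simp add: subfield_of_order_def)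
  moreover have "card (poly_family p q d :: 'a poly set) \<noteq> 0"
    using monom_one_mem_poly_family[OF assms(1,4)] poly_family_finite assms(3)
      prime_gt_0_nat[OF assms(1)]
    by (metis card_0_eq empty_iff zero_less_power)
  ultimately show ?thesis using True by simp
next
  case False
  then show ?thesis
    using additive_char_sum_poly_family_eq_0[OF assms(1-3,5-9)] by (simp add: subfield_of_order_def)
qed

end
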